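(* Consider a mixed-integer program (the paper's neoadjuvant chance-constrained chemotherapy model) whose variables include effective concentrations $E_{d,s}$ ($d\in\mathcal{D}$, $s\in\{0,\dots,S\}$) and log cell populations $P^{(k)}_{q,s}$ ($q\in\mathcal{Q}$, $s\in\{0,\dots,S\}$, $k\in\{1,\dots,K\}$), and whose constraints include, for all $q,k$ and $s\in\{0,\dots,S-1\}$, $$P^{(k)}_{q,s+1}=P^{(k)}_{q,s}+h\Big(\Lambda\big(\ln N^{(k)}_{q,\infty}-P^{(k)}_{q,s}\big)-\sum_{d\in\mathcal{D}}\eta_{d,q}\exp\big(-\rho_{d,q}\,t(s)\big)E_{d,s}\Big),\qquad P^{(k)}_{q,0}=\ln N^{(k)}_{q,0},$$ where $h>0$, $\Lambda>0$, $\eta_{d,q}\ge 0$, $\rho_{d,q}$ are constants, $t(s)=sh$, and $N^{(k)}_{q,0},N^{(k)}_{q,\infty}>0$ are given scenario data (together with further constraints: linearization of $E_{d,s}=\max\{0,C_{d,s}-\beta_{d,\mathrm{eff}}\}$, discretized pharmacokinetics, chance constraints and operational constraints). Suppose $\Lambda h\le 1$. Let $(\mathbf{E}^{[1]},\mathbf{P}^{[1]})$ and $(\mathbf{E}^{[2]},\mathbf{P}^{[2]})$ be the corresponding components of two feasible solutions of this program, with $E^{[1]}_{d,s}\ge E^{[2]}_{d,s}$ for all $d\in\mathcal{D}$, $s\in\{0,\dots,S\}$. Then $P^{[1],(k)}_{q,S}\le P^{[2],(k)}_{q,S}$ for all $q\in\mathcal{Q}$ and $k\in\{1,\dots,K\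}$.
   Context: $\mathcal{D}$ is a finite set of drugs, $\mathcal{Q}$ a finite set of cancer cell types, and $k\in\{1,\dots,K\}$ indexes scenarios describing tumor heterogeneity (initial populations $N^{(k)}_{q,0}$ and limits $N^{(k)}_{q,\infty}$). $\eta_{d,q}\ge0$ is the fractional kill effect parameter of drug $d$ on cell type $q$ and $\rho_{d,q}$ the temporal resistance parameter. The planning horizon $[0,T]$ is discretized as $t(s)=sh$, $s=0,\dots,S$, $T=Sh$. *)

theory Defs
  imports Complex_Main
begin

definition tgrid :: "real \<Rightarrow> nat \<Rightarrow> real" where
  "tgrid h s = real s * h"

definition pop_dynamics ::
  "'d set \<Rightarrow> 'q set \<Rightarrow> nat \<Rightarrow> nat \<Rightarrow> real \<Rightarrow> real \<Rightarrow> ('d \<Rightarrow> 'q \<Rightarrow> real) \<Rightarrow> ('d \<Rightarrow> 'q \<Rightarrow> real)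
   \<Rightarrow> ('q \<Rightarrow> nat \<Rightarrow> real) \<Rightarrow> ('q \<Rightarrow> nat \<Rightarrow> real)
   \<Rightarrow> ('d \<Rightarrow> nat \<Rightarrow> real) \<Rightarrow> ('q \<Rightarrow> nat \<Rightarrow> nat \<Rightarrow> real) \<Rightarrow> bool" where
  "pop_dynamics D Q K S h Lambda eta rho N0 Ninf E P \<longleftrightarrow>
     (\<forall>q\<in>Q. \<forall>k\<in>{1..K}.
        P q k 0 = ln (N0 q k) \<and>
        (\<forall>s<S. P q k (Suc s) = P q k s + h * (Lambda * (ln (Ninf q k) - P q k s)
            - (\<Sum>d\<in>D. eta d q * exp (- rho d q * tgrid h s) * E d s))))"

end

theory Submission
  imports Defs
begin

text \<open>One step of the discretized Gompertz dynamics is the map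
  \<open>x \<mapsto> (1 - \<Lambda> h) x + h \<Lambda> c - h u\<close>: for \<open>\<Lambda> h \<le> 1\<close> it is nondecreasing in the current
  log-population \<open>x\<close> and nonincreasing in the kill term \<open>u\<close>. A larger kill term at every
  step therefore keeps the trajectory below the other one, by induction over the time grid.
  With \<open>\<eta> \<ge> 0\<close> the kill term is a nondecreasing function of the effective concentrations.\<close>

lemma gompertz_step_mono:
  fixes h Lambda c x y u v :: real
  assumes "0 \<le> h" and "Lambda * h \<le> 1" and "x \<le> y" and "v \<le> u"
  shows "x + h * (Lambda * (c - x) - u) \<le> y + h * (Lambda * (c - y) - v)"
proof -
  have "(1 - Lambda * h) * x \<le> (1 - Lambda * h) * y"
    using assms(2,3) by (intro mult_left_mono) auto
  moreover have "h * v \<le> h * u"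
    using assms(1,4) by (intro mult_left_mono)
  ultimately show ?thesis
    by (simp add: algebra_simps)
qed

lemma gompertz_trajectory_comparison:
  fixes h Lambda c :: real and x y u v :: "nat \<Rightarrow> real"
  assumes "0 \<le> h" and "Lambda * h \<le> 1" and "x 0 \<le> y 0"
    and "\<And>s. s < S \<Longrightarrow> x (Suc s) = x s + h * (Lambda * (c - x s) - u s)"
    and "\<And>s. s < S \<Longrightarrow> y (Suc s) = y s + h * (Lambda * (c - y s) - v s)"
    and "\<And>s. s < S \<Longrightarrow> v s \<le> u s"
  shows "x S \<le> y S"
proof -
  have "x s \<le> y s" if "s \<le> S" for s
    using that
  proof (induction s)
    case 0
    show ?case using assms(3) .
  next
    case (Suc s)
    then have "s < S" by simp
    with Suc.IH show ?case
      using assms(1,2) assms(4-6)[of s] gompertz_step_mono by simp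
  qed
  then show ?thesis by simp
qed

lemma kill_term_mono:
  fixes eta rho :: "'d \<Rightarrow> 'q \<Rightarrow> real" and E1 E2 :: "'d \<Rightarrow> nat \<Rightarrow> real"
  assumes "\<forall>d\<in>D. eta d q \<ge> 0" and "\<forall>d\<in>D. E2 d s \<le> E1 d s"
  shows "(\<Sum>d\<in>D. eta d q * exp (- rho d q * tgrid h s) * E2 d s)
           \<le> (\<Sum>d\<in>D. eta d q * exp (- rho d q * tgrid h s) * E1 d s)"
  using assms by (intro sum_mono mult_left_mono) auto

lemma pop_dynamicsD:
  assumes "pop_dynamics D Q K S h Lambda eta rho N0 Ninf E P" and "q \<in> Q" and "k \<in> {1..K}"
  shows "P q k 0 = ln (N0 q k)"
    and "\<And>s. s < S \<Longrightarrow> P q k (Suc s) = P q k s + h * (Lambda * (ln (Ninf q k) - P q k s)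
            - (\<Sum>d\<in>D. eta d q * exp (- rho d q * tgrid h s) * E d s))"
  using assms unfolding pop_dynamics_def by auto

theorem theorem5:
  fixes D :: "'d set" and Q :: "'q set" and K S :: nat and h Lambda :: real
    and eta rho :: "'d \<Rightarrow> 'q \<Rightarrow> real"
    and N0 Ninf :: "'q \<Rightarrow> nat \<Rightarrow> real"
    and E1 E2 :: "'d \<Rightarrow> nat \<Rightarrow> real"
    and P1 P2 :: "'q \<Rightarrow> nat \<Rightarrow> nat \<Rightarrow> real"
  assumes "finite D" and "finite Q"
    and "h > 0" and "Lambda > 0" and "Lambda * h \<le> 1"
    and "\<forall>d\<in>D. \<forall>q\<in>Q. eta d q \<ge> 0"
    and "\<forall>q\<in>Q. \<forall>k\<in>{1..K}. N0 q k > 0 \<and> Ninf q k > 0"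
    and "pop_dynamics D Q K S h Lambda eta rho N0 Ninf E1 P1"
    and "pop_dynamics D Q K S h Lambda eta rho N0 Ninf E2 P2"
    and "\<forall>d\<in>D. \<forall>s\<in>{0..S}. E1 d s \<ge> E2 d s"
  shows "\<forall>q\<in>Q. \<forall>k\<in>{1..K}. P1 q k S \<le> P2 q k S"
proof (intro ballI)
  fix q k
  assume q: "q \<in> Q" and k: "k \<in> {1..K}"
  note P1 = pop_dynamicsD[OF assms(8) q k] and P2 = pop_dynamicsD[OF assms(9) q k]
  show "P1 q k S \<le> P2 q k S"
  proof (rule gompertz_trajectory_comparison[where c = "ln (Ninf q k)"])
    show "0 \<le> h" using assms(3) by simp
    show "Lambda * h \<le> 1" by fact
    show "P1 q k 0 \<le> P2 q k 0" using P1(1) P2(1) by simp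
  next
    fix s assume "s < S"
    then show "(\<Sum>d\<in>D. eta d q * exp (- rho d q * tgrid h s) * E2 d s)
               \<le> (\<Sum>d\<in>D. eta d q * exp (- rho d q * tgrid h s) * E1 d s)"
      using assms(6,10) q by (intro kill_term_mono) auto
  qed (use P1(2) P2(2) in blast)+
qed

end
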